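(* Let $N\ge3$ and $1\le k\le N-1$ be integers with $\gcd(N,k)=1$, and let $p$ be an odd prime with $p\equiv\pm1$ or $0\pmod N$. Let $\tau$ lie in the upper half-plane, $q=e^{2\pi i\tau}$, and $q_j=e^{2\pi i(\tau+j)/p}$ for $j=0,\dots,p-1$. Then \[\left(1+\chi_{-N}(p)p^2\right)J_{N\tau}(q^k)=\sum_{j=0}^{p-1}p\,J_{\frac{N(\tau+j)}{p}}(q_j^k)+\chi_{-N}(p)\,J_{Np\tau}(q^{pk}).\]
   Context: Let $J(z)=\log|z|\log|1-z|$ and $B_3(x)=x^3-\frac32x^2+\frac12x$. For $\sigma$ in the upper half-plane, with $Q=e^{2\pi i\sigma}$, and $z\in\mathbb{C}^*$ not in $Q^{\mathbb{Z}}$, define \[J_\sigma(z)=\sum_{n=0}^\infty J(zQ^n)-\sum_{n=1}^\infty J(z^{-1}Q^n)+\frac13\log^2|Q|\,B_3\!\left(\frac{\log|z|}{\log|Q|}\right).\] Here $\chi_{-N}(p)$ equals $1$ if $p\equiv1\pmod N$, $-1$ if $p\equiv-1\pmod N$, and $0$ if $p\equiv0\pmod N$. *)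

theory Defs
  imports "HOL-Analysis.Analysis"
begin

definition Jfun :: "complex \<Rightarrow> real" where
  "Jfun z = ln (cmod z) * ln (cmod (1 - z))"

definition B3 :: "real \<Rightarrow> real" where
  "B3 x = x ^ 3 - 3 / 2 * x ^ 2 + 1 / 2 * x"

definition Jsigma :: "complex \<Rightarrow> complex \<Rightarrow> real" where
  "Jsigma \<sigma> z =
     (let Q = exp (2 * pi * \<i> * \<sigma>) in
       (\<Sum>n. Jfun (z * Q ^ n)) - (\<Sum>n. Jfun (inverse z * Q ^ (Suc n)))
       + 1 / 3 * (ln (cmod Q)) ^ 2 * B3 (ln (cmod z) / ln (cmod Q)))"

definition chiN :: "nat \<Rightarrow> nat \<Rightarrow> int" where
  "chiN N p = (if p mod N = 1 then 1 else if p mod N = N - 1 then -1 else 0)"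

end

theory Submission
  imports Defs "HOL-Computational_Algebra.Fundamental_Theorem_Algebra" "HOL-Number_Theory.Cong"
begin

text \<open>
  If \<open>Q = x ^ N\<close> with \<open>0 < \<bar>x\<bar> < 1\<close> and \<open>0 < k < N\<close>, every term of \<open>J_\<sigma>(x ^ k)\<close> is of
  the form \<open>J(x ^ m) = ln \<bar>x\<bar> * a(m)\<close> with \<open>a(m) = m ln \<bar>1 - x ^ m\<bar>\<close>, so \<open>J_\<sigma>(x ^ k)\<close> is
  \<open>ln \<bar>x\<bar>\<close> times the sum of \<open>a\<close> over the class \<open>k mod N\<close> minus its sum over the class
  \<open>-k mod N\<close>, plus the Bernoulli term. The \<open>q_j\<close> are the \<open>p\<close>-th roots of \<open>q\<close>. If \<open>p\<close> does
  not divide \<open>m\<close>, the \<open>q_j ^ m\<close> are the \<open>p\<close>-th roots of \<open>q ^ m\<close>, so the product of the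
  \<open>1 - q_j ^ m\<close> is \<open>1 - q ^ m\<close>; if \<open>p\<close> divides \<open>m\<close>, all \<open>q_j ^ m\<close> equal \<open>q ^ (m div p)\<close>.
  So summing over \<open>j\<close> keeps \<open>a(m)\<close> when \<open>p\<close> does not divide \<open>m\<close> and replaces it by
  \<open>p\<^sup>2 a(m div p)\<close> otherwise. Since \<open>p\<close> is its own inverse modulo \<open>N\<close>, the multiples
  of \<open>p\<close> in the class of \<open>k\<close> are \<open>p\<close> times the class of \<open>\<chi>(p) k\<close> (and there are none if
  \<open>p = N\<close>), and regrouping the absolutely convergent sums gives the identity.
\<close>

section \<open>Products over roots of unity\<close>

lemma prod_nth_roots:
  fixes c x :: complex
  assumes "c \<noteq> 0" "n > 0"
  shows "(\<Prod>z | z ^ n = c. x - z) = x ^ n - c"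
proof -
  define P where "P = monom 1 n + [:-c:]"
  have poly_P: "poly P y = y ^ n - c" for y by (simp add: P_def poly_monom)
  have "rsquarefree P"
    unfolding rsquarefree_roots
  proof (intro allI notI)
    fix a assume "poly P a = 0 \<and> poly (pderiv P) a = 0"
    then have "a ^ n = c" "of_nat n * a ^ (n - 1) = 0"
      by (simp_all add: poly_P P_def pderiv_add pderiv_monom poly_monom)
    then show False using assms by (auto simp: power_0_left split: if_splits)
  qed
  moreover have "degree P = n"
    using assms unfolding P_def by (subst degree_add_eq_left) (simp_all add: degree_monom_eq)
  then have "lead_coeff P = 1"
    using assms by (cases n) (simp_all add: P_def coeff_monom)
  ultimately have "(\<Prod>z | poly P z = 0. [:-z, 1:]) = P"
    using complex_poly_decompose_rsquarefree[of P] by simp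
  then have "poly (\<Prod>z | poly P z = 0. [:-z, 1:]) x = poly P x" by simp
  then show ?thesis by (simp add: poly_prod poly_P)
qed

lemma bij_betw_power_pth_roots:
  fixes p m :: nat and \<tau> :: complex
  assumes "prime p" "\<not> p dvd m"
  shows "bij_betw (\<lambda>j. exp (2 * pi * \<i> * (\<tau> + of_nat j) / of_nat p) ^ m) {..<p}
           {z. z ^ p = exp (2 * pi * \<i> * \<tau>) ^ m}"
proof -
  have p0: "p > 0" using assms prime_gt_0_nat by blast
  define w where "w j = exp (2 * pi * \<i> * (\<tau> + of_nat j) / of_nat p) ^ m" for j
  have w: "w j = exp (of_nat m * (2 * pi * \<i> * (\<tau> + of_nat j) / of_nat p))" for j
    unfolding w_def by (rule exp_of_nat_mult[symmetric])
  have "inj_on w {..<p}"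
  proof (rule inj_onI)
    fix j l assume jl: "j \<in> {..<p}" "l \<in> {..<p}" "w j = w l"
    then obtain n :: int where
      "of_nat m * (2 * pi * \<i> * (\<tau> + of_nat j) / of_nat p)
         = of_nat m * (2 * pi * \<i> * (\<tau> + of_nat l) / of_nat p) + of_real (of_int (2 * n) * pi) * \<i>"
      by (auto simp: w exp_eq)
    then have "2 * pi * \<i> * of_int (int m * (int j - int l))
        = 2 * pi * \<i> * (of_int (int p * n) :: complex)"
      using p0 by (simp add: field_simps)
    then have "of_int (int m * (int j - int l)) = (of_int (int p * n) :: complex)"
      by simp
    then have "int p dvd int m * (int j - int l)"
      by (simp only: of_int_eq_iff) simp
    then have "int p dvd int j - int l"
      using assms by (simp add: prime_dvd_mult_iff)
    then have "[j = l] (mod p)"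
      by (simp add: cong_iff_dvd_diff flip: cong_int_iff)
    then show "j = l"
      using jl by (simp add: cong_less_modulus_unique_nat)
  qed
  moreover have "w ` {..<p} \<subseteq> {z. z ^ p = exp (2 * pi * \<i> * \<tau>) ^ m}"
  proof safe
    fix j
    have "w j ^ p = exp (of_nat m * (2 * pi * \<i> * \<tau>)) * exp (of_nat (m * j) * (2 * pi * \<i>))"
      unfolding w exp_add[symmetric] exp_of_nat_mult[symmetric] using p0
      by (intro arg_cong[where f=exp]) (simp add: field_simps)
    then show "w j ^ p = exp (2 * pi * \<i> * \<tau>) ^ m"
      by (simp only: exp_of_nat_mult) simp
  qed
  moreover have "card (w ` {..<p}) = card {z. z ^ p = exp (2 * pi * \<i> * \<tau>) ^ m}"
    using \<open>inj_on w {..<p}\<close> p0 by (simp add: card_image card_nth_roots)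
  ultimately show ?thesis
    unfolding bij_betw_def w_def[symmetric] using p0 by (simp add: card_subset_eq finite_nth_roots)
qed

lemma prod_one_minus_power_pth_roots:
  fixes p m :: nat and \<tau> :: complex
  assumes "prime p" "\<not> p dvd m"
  shows "(\<Prod>j<p. 1 - exp (2 * pi * \<i> * (\<tau> + of_nat j) / of_nat p) ^ m)
       = 1 - exp (2 * pi * \<i> * \<tau>) ^ m"
proof -
  have "(\<Prod>j<p. 1 - exp (2 * pi * \<i> * (\<tau> + of_nat j) / of_nat p) ^ m)
        = (\<Prod>z | z ^ p = exp (2 * pi * \<i> * \<tau>) ^ m. 1 - z)"
    using bij_betw_power_pth_roots[OF assms] by (rule prod.reindex_bij_betw)
  also have "\<dots> = 1 - exp (2 * pi * \<i> * \<tau>) ^ m"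
    using prime_gt_0_nat[OF assms(1)] by (simp add: prod_nth_roots)
  finally show ?thesis .
qed

section \<open>The coefficients m ln|1 - x^m|\<close>

definition log_coeff :: "complex \<Rightarrow> nat \<Rightarrow> real" where
  "log_coeff x m = real m * ln (cmod (1 - x ^ m))"

lemma Jfun_power: "x \<noteq> 0 \<Longrightarrow> Jfun (x ^ m) = ln (cmod x) * log_coeff x m"
  by (simp add: Jfun_def log_coeff_def norm_power ln_realpow)

lemma abs_ln_norm_one_minus_le:
  fixes y :: complex
  assumes "cmod y < 1"
  shows "\<bar>ln (cmod (1 - y))\<bar> \<le> cmod y / (1 - cmod y)"
proof -
  have lower: "1 - cmod y \<le> cmod (1 - y)" and upper: "cmod (1 - y) \<le> 1 + cmod y"
    using norm_triangle_ineq2[of 1 y] norm_triangle_ineq4[of 1 y] by simp_all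
  have pos: "0 < cmod (1 - y)" using lower assms by linarith
  have "ln (cmod (1 - y)) \<le> cmod y / (1 - cmod y)"
  proof -
    have "ln (cmod (1 - y)) \<le> cmod y"
      using ln_le_minus_one[OF pos] upper by linarith
    also have "\<dots> \<le> cmod y / (1 - cmod y)"
      using assms by (simp add: le_divide_eq mult_left_le)
    finally show ?thesis .
  qed
  moreover have "- ln (cmod (1 - y)) \<le> cmod y / (1 - cmod y)"
  proof -
    have "- ln (cmod (1 - y)) = ln (1 / cmod (1 - y))"
      using pos by (simp add: ln_div)
    also have "\<dots> \<le> 1 / cmod (1 - y) - 1"
      using pos by (intro ln_le_minus_one) simp
    also have "\<dots> \<le> 1 / (1 - cmod y) - 1"
      using lower assms pos by (intro diff_right_mono divide_left_mono) auto
    also have "\<dots> = cmod y / (1 - cmod y)"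
      using assms by (simp add: field_simps)
    finally show ?thesis .
  qed
  ultimately show ?thesis by linarith
qed

lemma abs_log_coeff_le:
  assumes "cmod x < 1"
  shows "\<bar>log_coeff x m\<bar> \<le> real m * cmod x ^ m / (1 - cmod x)"
proof (cases "m = 0")
  case False
  have "cmod x ^ m \<le> cmod x"
    using False assms by (simp add: power_le_one_iff power_decreasing[of 1 m, simplified])
  have "\<bar>log_coeff x m\<bar> = real m * \<bar>ln (cmod (1 - x ^ m))\<bar>"
    by (simp add: log_coeff_def abs_mult)
  also have "\<dots> \<le> real m * (cmod x ^ m / (1 - cmod x ^ m))"
    using abs_ln_norm_one_minus_le[of "x ^ m"] \<open>cmod x ^ m \<le> cmod x\<close> assms
    by (intro mult_left_mono) (simp_all add: norm_power)
  also have "\<dots> \<le> real m * (cmod x ^ m / (1 - cmod x))"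
    using \<open>cmod x ^ m \<le> cmod x\<close> assms by (intro mult_left_mono divide_left_mono) auto
  finally show ?thesis by simp
qed (simp add: log_coeff_def)

lemma summable_on_log_coeff:
  assumes "cmod x < 1"
  shows "log_coeff x summable_on A"
proof -
  have "summable (\<lambda>m. real m * cmod x ^ m)"
  proof (rule summable_comparison_test')
    have "summable (\<lambda>m. diffs (\<lambda>_. 1) m * cmod x ^ m)"
      using assms by (intro termdiff_converges[of _ 1]) auto
    then show "summable (\<lambda>m. real (Suc m) * cmod x ^ m)"
      by (simp add: diffs_def)
  qed (auto intro: mult_right_mono)
  then have "(\<lambda>m. norm (real m * cmod x ^ m / (1 - cmod x))) summable_on UNIV"
    by (intro norm_summable_imp_summable_on) (simp add: summable_divide)
  then have "(\<lambda>m. norm (log_coeff x m)) summable_on UNIV"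
  proof (rule Infinite_Sum.abs_summable_on_comparison_test)
    show "norm (log_coeff x m) \<le> norm (real m * cmod x ^ m / (1 - cmod x))" for m
      using abs_log_coeff_le[OF assms, of m] assms by simp
  qed
  then show ?thesis
    using abs_summable_summable summable_on_subset_banach by blast
qed

lemma log_coeff_power: "real p * log_coeff (x ^ p) m = log_coeff x (p * m)"
  by (simp add: log_coeff_def power_mult)

section \<open>Sums over residue classes\<close>

lemma sums_residue_class:
  fixes f :: "nat \<Rightarrow> 'a :: banach"
  assumes "f summable_on {m. m mod N = c}" "c < N"
  shows "(\<lambda>n. f (c + N * n)) sums (\<Sum>\<^sub>\<infinity>m | m mod N = c. f m)"
proof -
  have "range (\<lambda>n. c + N * n) = {m. m mod N = c}"
    using assms(2) by (auto simp: image_iff intro: exI[of _ "_ div N"]) (metis add.commute div_mult_mod_eq mult.commute)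
  moreover have "inj (\<lambda>n. c + N * n)"
    using assms(2) by (auto intro: injI)
  ultimately have "((\<lambda>n. f (c + N * n)) has_sum (\<Sum>\<^sub>\<infinity>m | m mod N = c. f m)) UNIV"
    using has_sum_reindex[of "\<lambda>n. c + N * n" UNIV f] has_sum_infsum[OF assms(1)]
    by (simp add: comp_def)
  then show ?thesis
    by (rule has_sum_imp_sums)
qed

lemma has_sum_sum_fun:
  fixes f :: "'i \<Rightarrow> 'a \<Rightarrow> 'b::topological_comm_monoid_add"
  assumes "finite I" "\<And>i. i \<in> I \<Longrightarrow> (f i has_sum s i) A"
  shows "((\<lambda>x. \<Sum>i\<in>I. f i x) has_sum (\<Sum>i\<in>I. s i)) A"
  using assms by (induction I rule: finite_induct) (auto intro: has_sum_add)

definition signed_class_sum :: "nat \<Rightarrow> nat \<Rightarrow> (nat \<Rightarrow> real) \<Rightarrow> real" where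
  "signed_class_sum N k f = (\<Sum>\<^sub>\<infinity>m | m mod N = k. f m) - (\<Sum>\<^sub>\<infinity>m | m mod N = N - k. f m)"

lemma signed_class_sum_sum:
  assumes "finite I" "\<And>i. i \<in> I \<Longrightarrow> f i summable_on UNIV"
  shows "signed_class_sum N k (\<lambda>m. \<Sum>i\<in>I. f i m) = (\<Sum>i\<in>I. signed_class_sum N k (f i))"
proof -
  have "(\<Sum>\<^sub>\<infinity>m\<in>C. \<Sum>i\<in>I. f i m) = (\<Sum>i\<in>I. \<Sum>\<^sub>\<infinity>m\<in>C. f i m)" for C
    using assms summable_on_subset_banach
    by (intro infsumI has_sum_sum_fun has_sum_infsum) blast+
  then show ?thesis
    by (simp add: signed_class_sum_def sum_subtractf)
qed

lemma signed_class_sum_cmult: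
  "signed_class_sum N k (\<lambda>m. c * f m) = c * signed_class_sum N k f"
  by (simp add: signed_class_sum_def infsum_cmult_right' right_diff_distrib)

lemma residue_class_dvd_eq_image:
  fixes p N c c' :: nat
  assumes "coprime p N" "c' < N" "(p * c') mod N = c"
  shows "{m. m mod N = c \<and> p dvd m} = (*) p ` {s. s mod N = c'}"
proof (intro equalityI subsetI)
  fix m assume "m \<in> {m. m mod N = c \<and> p dvd m}"
  then obtain s where m: "m = p * s" and "[p * s = p * c'] (mod N)"
    using assms(3) by (auto simp: cong_def)
  then have "[s = c'] (mod N)"
    using assms(1) by (simp add: cong_mult_lcancel_nat)
  then show "m \<in> (*) p ` {s. s mod N = c'}"
    using assms(2) m by (auto simp: cong_def)
next
  fix m assume "m \<in> (*) p ` {s. s mod N = c'}"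
  then obtain s where m: "m = p * s" and "s mod N = c'"
    by blast
  then have "m mod N = (p * c') mod N"
    by (metis mod_mult_right_eq)
  then show "m \<in> {m. m mod N = c \<and> p dvd m}"
    using assms(3) m by simp
qed

lemma infsum_residue_class_dvd_split:
  fixes a :: "nat \<Rightarrow> real"
  assumes "a summable_on UNIV" "p > 0" "coprime p N" "c' < N" "(p * c') mod N = c"
  shows "(\<Sum>\<^sub>\<infinity>m | m mod N = c. if p dvd m then real p ^ 2 * a (m div p) else a m)
       = (\<Sum>\<^sub>\<infinity>m | m mod N = c. a m) + real p ^ 2 * (\<Sum>\<^sub>\<infinity>s | s mod N = c'. a s)
         - (\<Sum>\<^sub>\<infinity>s | s mod N = c'. a (p * s))"
proof -
  define b where "b m = (if p dvd m then real p ^ 2 * a (m div p) else a m)" for m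
  define A where "A = {m. m mod N = c}"
  define C where "C = {s. s mod N = c'}"
  define M where "M = {m. m mod N = c \<and> p dvd m}"
  have M: "M = (*) p ` C" and inj: "inj_on ((*) p) C"
    using residue_class_dvd_eq_image[OF assms(3-5)] assms(2) by (auto simp: M_def C_def inj_on_def)
  have "M \<subseteq> A"
    by (auto simp: A_def M_def)
  have a_summable: "a summable_on X" for X
    using assms(1) summable_on_subset_banach by blast
  have b_M: "b (p * s) = real p ^ 2 * a s" for s
    using assms(2) by (simp add: b_def)
  have "b summable_on M"
    unfolding M summable_on_reindex[OF inj] by (simp add: comp_def b_M a_summable summable_on_cmult_right)
  moreover have b_eq: "b m = a m" if "m \<in> A - M" for m
    using that by (simp add: b_def A_def M_def)
  then have "b summable_on (A - M)"
    using a_summable summable_on_cong by blast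
  ultimately have "infsum b A = infsum b M + infsum b (A - M)"
    using infsum_Un_disjoint[of b M "A - M"] \<open>M \<subseteq> A\<close> by (simp add: Un_absorb1)
  also have "infsum b M = real p ^ 2 * infsum a C"
    unfolding M infsum_reindex[OF inj] by (simp add: comp_def b_M infsum_cmult_right')
  also have "infsum b (A - M) = infsum a A - infsum (\<lambda>s. a (p * s)) C"
  proof -
    have "infsum a A = infsum a M + infsum a (A - M)"
      using infsum_Un_disjoint[OF a_summable a_summable, of M "A - M"] \<open>M \<subseteq> A\<close> by (simp add: Un_absorb1)
    moreover have "infsum b (A - M) = infsum a (A - M)"
      using b_eq by (rule infsum_cong)
    moreover have "infsum a M = infsum (\<lambda>s. a (p * s)) C"
      unfolding M infsum_reindex[OF inj] by (simp add: comp_def)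
    ultimately show ?thesis
      by simp
  qed
  finally show ?thesis
    by (simp add: A_def C_def b_def)
qed

lemma mult_complement_mod_eq:
  fixes p N c :: nat
  assumes "p mod N = N - 1" "c < N"
  shows "(p * (N - c)) mod N = c"
proof -
  define d where "d = N - Suc c"
  have N: "N = c + Suc d" and "N - 1 = c + d" "N - c = Suc d"
    using assms(2) by (simp_all add: d_def)
  then have "(N - 1) * (N - c) = c + N * d"
    by (simp add: algebra_simps)
  have "(p * (N - c)) mod N = (p mod N * (N - c)) mod N"
    by (simp add: mod_mult_left_eq)
  also have "\<dots> = (c + N * d) mod N"
    by (simp only: assms(1) \<open>(N - 1) * (N - c) = c + N * d\<close>)
  also have "\<dots> = c"
    using assms(2) by simp
  finally show ?thesis .
qed

lemma signed_class_sum_dvd_split_one: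
  fixes a :: "nat \<Rightarrow> real"
  assumes "a summable_on UNIV" "p mod N = 1" "0 < k" "k < N"
  shows "signed_class_sum N k (\<lambda>m. if p dvd m then real p ^ 2 * a (m div p) else a m)
       = (1 + real p ^ 2) * signed_class_sum N k a - signed_class_sum N k (\<lambda>s. a (p * s))"
proof -
  have "p > 0" "coprime p N"
    using assms(2,4) coprime_mod_left_iff[of N p] by (cases p; simp)+
  moreover have "(p * c) mod N = c" if "c < N" for c
    using assms(2) that by (metis mod_less mod_mult_left_eq mult_1)
  ultimately have "(\<Sum>\<^sub>\<infinity>m | m mod N = c. if p dvd m then real p ^ 2 * a (m div p) else a m)
      = (\<Sum>\<^sub>\<infinity>m | m mod N = c. a m) + real p ^ 2 * (\<Sum>\<^sub>\<infinity>s | s mod N = c. a s)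
        - (\<Sum>\<^sub>\<infinity>s | s mod N = c. a (p * s))" if "c < N" for c
    using that by (intro infsum_residue_class_dvd_split[OF assms(1)]) auto
  moreover have "N - k < N"
    using assms(3,4) by simp
  ultimately show ?thesis
    using assms(4) unfolding signed_class_sum_def by (simp only:) (simp add: algebra_simps)
qed

lemma signed_class_sum_dvd_split_minus_one:
  fixes a :: "nat \<Rightarrow> real"
  assumes "a summable_on UNIV" "p mod N = N - 1" "0 < k" "k < N"
  shows "signed_class_sum N k (\<lambda>m. if p dvd m then real p ^ 2 * a (m div p) else a m)
       = (1 - real p ^ 2) * signed_class_sum N k a + signed_class_sum N k (\<lambda>s. a (p * s))"
proof -
  have "p > 0" "coprime p N"
    using assms(2-4) coprime_mod_left_iff[of N p] coprime_diff_one_left_nat[of N] by (cases p; simp)+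
  then have "(\<Sum>\<^sub>\<infinity>m | m mod N = c. if p dvd m then real p ^ 2 * a (m div p) else a m)
      = (\<Sum>\<^sub>\<infinity>m | m mod N = c. a m) + real p ^ 2 * (\<Sum>\<^sub>\<infinity>s | s mod N = N - c. a s)
        - (\<Sum>\<^sub>\<infinity>s | s mod N = N - c. a (p * s))" if "0 < c" "c < N" for c
    using that by (intro infsum_residue_class_dvd_split[OF assms(1)] mult_complement_mod_eq[OF assms(2)]) auto
  moreover have "0 < N - k" "N - k < N" "N - (N - k) = k"
    using assms(3,4) by simp_all
  ultimately show ?thesis
    using assms(3,4) unfolding signed_class_sum_def by (simp only:) (simp add: algebra_simps)
qed

lemma signed_class_sum_dvd_split_multiple:
  fixes a :: "nat \<Rightarrow> real"
  assumes "N dvd p" "0 < k" "k < N"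
  shows "signed_class_sum N k (\<lambda>m. if p dvd m then real p ^ 2 * a (m div p) else a m)
       = signed_class_sum N k a"
proof -
  have "(\<Sum>\<^sub>\<infinity>m | m mod N = c. if p dvd m then real p ^ 2 * a (m div p) else a m)
      = (\<Sum>\<^sub>\<infinity>m | m mod N = c. a m)" if "0 < c" "c < N" for c
  proof (rule infsum_cong)
    fix m assume m: "m \<in> {m. m mod N = c}"
    have "\<not> p dvd m"
    proof
      assume "p dvd m"
      with assms(1) have "N dvd m"
        by (rule dvd_trans)
      then show False
        using m that by (simp add: dvd_eq_mod_eq_0)
    qed
    then show "(if p dvd m then real p ^ 2 * a (m div p) else a m) = a m"
      by simp
  qed
  then show ?thesis
    using assms(2,3) by (simp add: signed_class_sum_def)
qed

lemma signed_class_sum_dvd_split: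
  fixes a :: "nat \<Rightarrow> real"
  assumes "a summable_on UNIV" "0 < k" "k < N" "p mod N = 1 \<or> p mod N = N - 1 \<or> p mod N = 0"
  shows "signed_class_sum N k (\<lambda>m. if p dvd m then real p ^ 2 * a (m div p) else a m)
       = (1 + real_of_int (chiN N p) * real p ^ 2) * signed_class_sum N k a
         - real_of_int (chiN N p) * signed_class_sum N k (\<lambda>s. a (p * s))"
proof -
  consider "p mod N = 1" | "p mod N = N - 1" "p mod N \<noteq> 1" | "p mod N = 0"
    using assms(4) by (cases "p mod N = 1") auto
  then show ?thesis
  proof cases
    case 1
    then show ?thesis
      using signed_class_sum_dvd_split_one[OF assms(1) 1 assms(2,3)] by (simp add: chiN_def)
  next
    case 2
    then show ?thesis
      using signed_class_sum_dvd_split_minus_one[OF assms(1) 2(1) assms(2,3)] by (simp add: chiN_def)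
  next
    case 3
    then show ?thesis
      using signed_class_sum_dvd_split_multiple[OF _ assms(2,3)] assms(2,3)
      by (simp add: chiN_def dvd_eq_mod_eq_0)
  qed
qed

section \<open>Expansion of J_sigma\<close>

lemma Jsigma_power:
  assumes Q: "exp (2 * pi * \<i> * \<sigma>) = x ^ N" and x: "x \<noteq> 0" "cmod x < 1" and k: "0 < k" "k < N"
  shows "Jsigma \<sigma> (x ^ k) = ln (cmod x) * signed_class_sum N k (log_coeff x)
           + 1 / 3 * (real N * ln (cmod x)) ^ 2 * B3 (real k / real N)"
proof -
  have class_sums: "(\<lambda>n. ln (cmod x) * log_coeff x (c + N * n))
      sums (ln (cmod x) * (\<Sum>\<^sub>\<infinity>m | m mod N = c. log_coeff x m))" if "c < N" for c
    using that x by (intro sums_mult sums_residue_class summable_on_log_coeff)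
  have pos: "Jfun (x ^ k * (x ^ N) ^ n) = ln (cmod x) * log_coeff x (k + N * n)" for n
    using x by (simp add: Jfun_power flip: power_add power_mult)
  have neg: "Jfun (inverse (x ^ k) * (x ^ N) ^ Suc n) = ln (cmod x) * log_coeff x (N - k + N * n)" for n
  proof -
    have e: "(x ^ N) ^ Suc n = x ^ k * x ^ (N - k + N * n)"
      using k by (simp flip: power_add power_mult)
    have "inverse (x ^ k) * (x ^ N) ^ Suc n = x ^ (N - k + N * n)"
      unfolding e using x by (simp add: field_simps)
    then show ?thesis
      using x by (simp add: Jfun_power)
  qed
  have "ln (cmod (x ^ j)) = real j * ln (cmod x)" for j
    using x by (simp add: norm_power ln_realpow)
  moreover have "ln (cmod x) \<noteq> 0"
    using x by simp
  moreover have "(\<Sum>n. Jfun (x ^ k * (x ^ N) ^ n)) = ln (cmod x) * (\<Sum>\<^sub>\<infinity>m | m mod N = k. log_coeff x m)"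
    unfolding pos using k by (intro sums_unique[symmetric] class_sums)
  moreover have "(\<Sum>n. Jfun (inverse (x ^ k) * (x ^ N) ^ Suc n))
      = ln (cmod x) * (\<Sum>\<^sub>\<infinity>m | m mod N = N - k. log_coeff x m)"
    unfolding neg using k by (intro sums_unique[symmetric] class_sums) simp
  ultimately show ?thesis
    using k unfolding Jsigma_def Let_def Q signed_class_sum_def by (simp add: right_diff_distrib)
qed

lemma Jsigma_pth_power:
  assumes "exp (2 * pi * \<i> * \<sigma>) = x ^ N" "x \<noteq> 0" "cmod x < 1" "0 < k" "k < N" "p > 0"
  shows "Jsigma (of_nat p * \<sigma>) (x ^ (p * k))
       = ln (cmod x) * signed_class_sum N k (\<lambda>s. log_coeff x (p * s))
         + real p ^ 2 * (1 / 3 * (real N * ln (cmod x)) ^ 2 * B3 (real k / real N))"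
proof -
  have "exp (2 * pi * \<i> * (of_nat p * \<sigma>)) = exp (2 * pi * \<i> * \<sigma>) ^ p"
    unfolding exp_of_nat_mult[symmetric] by (simp add: mult_ac)
  also have "\<dots> = (x ^ p) ^ N"
    unfolding assms(1) by (simp flip: power_mult add: mult.commute)
  finally have "Jsigma (of_nat p * \<sigma>) ((x ^ p) ^ k)
      = ln (cmod (x ^ p)) * signed_class_sum N k (log_coeff (x ^ p))
        + 1 / 3 * (real N * ln (cmod (x ^ p))) ^ 2 * B3 (real k / real N)"
    using assms(2-6) by (intro Jsigma_power) (simp_all add: norm_power power_less_one_iff)
  also have "ln (cmod (x ^ p)) * signed_class_sum N k (log_coeff (x ^ p))
      = ln (cmod x) * signed_class_sum N k (\<lambda>s. log_coeff x (p * s))"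
  proof -
    have "ln (cmod (x ^ p)) = ln (cmod x) * real p"
      using assms(2) by (simp add: norm_power ln_realpow)
    moreover have "real p * signed_class_sum N k (log_coeff (x ^ p))
        = signed_class_sum N k (\<lambda>s. log_coeff x (p * s))"
      by (simp add: log_coeff_power flip: signed_class_sum_cmult)
    ultimately show ?thesis
      by (simp only: mult.assoc)
  qed
  also have "1 / 3 * (real N * ln (cmod (x ^ p))) ^ 2 * B3 (real k / real N)
      = real p ^ 2 * (1 / 3 * (real N * ln (cmod x)) ^ 2 * B3 (real k / real N))"
    using assms(2) by (simp add: norm_power ln_realpow power_mult_distrib)
  finally show ?thesis
    by (simp add: power_mult)
qed

lemma sum_log_coeff_pth_roots:
  fixes p m :: nat and \<tau> :: complex
  assumes "Im \<tau> > 0" "prime p"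
  defines "q \<equiv> exp (2 * pi * \<i> * \<tau>)"
  shows "(\<Sum>j<p. log_coeff (exp (2 * pi * \<i> * (\<tau> + of_nat j) / of_nat p)) m)
       = (if p dvd m then real p ^ 2 * log_coeff q (m div p) else log_coeff q m)"
proof -
  have p0: "p > 0"
    using assms(2) prime_gt_0_nat by blast
  define w where "w j = exp (2 * pi * \<i> * (\<tau> + of_nat j) / of_nat p)" for j
  have "(\<Sum>j<p. log_coeff (w j) m)
      = (if p dvd m then real p ^ 2 * log_coeff q (m div p) else log_coeff q m)"
  proof (cases "p dvd m")
    case True
    then obtain s where m: "m = p * s" ..
    have "w j ^ m = exp (of_nat s * (2 * pi * \<i> * \<tau>)) * exp (of_nat (s * j) * (2 * pi * \<i>))" for j
      unfolding w_def m exp_add[symmetric] exp_of_nat_mult[symmetric] using p0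
      by (intro arg_cong[where f=exp]) (simp add: field_simps)
    then have "w j ^ m = q ^ s" for j
      unfolding q_def by (simp only: exp_of_nat_mult) simp
    then show ?thesis
      using True p0 by (simp add: log_coeff_def m power2_eq_square)
  next
    case False
    then have "m > 0"
      by (intro gr0I) simp
    have "cmod (w j) < 1" for j
      using assms(1) p0 by (simp add: w_def)
    then have "cmod (w j ^ m) < 1" for j
      using \<open>m > 0\<close> by (simp add: norm_power power_less_one_iff)
    then have "w j ^ m \<noteq> 1" for j
      by (metis norm_one less_irrefl)
    then have nonzero: "cmod (1 - w j ^ m) \<noteq> 0" for j
      by simp
    have "(\<Sum>j<p. log_coeff (w j) m) = real m * ln (\<Prod>j<p. cmod (1 - w j ^ m))"
      using nonzero by (simp add: log_coeff_def sum_distrib_left ln_prod)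
    also have "(\<Prod>j<p. cmod (1 - w j ^ m)) = cmod (1 - q ^ m)"
      using prod_one_minus_power_pth_roots[OF assms(2) False, of \<tau>]
      by (simp add: w_def q_def prod_norm)
    finally show ?thesis
      using False by (simp add: log_coeff_def)
  qed
  then show ?thesis
    by (simp add: w_def)
qed

lemma sum_Jsigma_pth_roots:
  fixes N k p :: nat and \<tau> :: complex
  assumes "Im \<tau> > 0" "prime p" "0 < k" "k < N"
  defines "q \<equiv> exp (2 * pi * \<i> * \<tau>)"
  shows "(\<Sum>j<p. real p * Jsigma (of_nat N * (\<tau> + of_nat j) / of_nat p)
                              (exp (2 * pi * \<i> * (\<tau> + of_nat j) / of_nat p) ^ k))
       = ln (cmod q) * signed_class_sum N k
           (\<lambda>m. if p dvd m then real p ^ 2 * log_coeff q (m div p) else log_coeff q m)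
         + 1 / 3 * (real N * ln (cmod q)) ^ 2 * B3 (real k / real N)"
proof -
  have p0: "p > 0"
    using assms(2) prime_gt_0_nat by blast
  define w where "w j = exp (2 * pi * \<i> * (\<tau> + of_nat j) / of_nat p)" for j
  define K where "K = 1 / 3 * (real N * ln (cmod q)) ^ 2 * B3 (real k / real N)"
  have w: "w j \<noteq> 0" "cmod (w j) < 1" for j
    using assms(1) p0 by (simp_all add: w_def)
  have ln_w: "ln (cmod (w j)) = ln (cmod q) / real p" for j
    by (simp add: w_def q_def)
  define \<sigma> where "\<sigma> j = of_nat N * (\<tau> + of_nat j) / of_nat p" for j
  have "exp (2 * pi * \<i> * \<sigma> j) = w j ^ N" for j
    unfolding w_def \<sigma>_def exp_of_nat_mult[symmetric] by (simp add: mult_ac)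
  then have "Jsigma (\<sigma> j) (w j ^ k)
      = ln (cmod (w j)) * signed_class_sum N k (log_coeff (w j))
        + 1 / 3 * (real N * ln (cmod (w j))) ^ 2 * B3 (real k / real N)" for j
    by (rule Jsigma_power[OF _ w assms(3,4)])
  then have "real p * Jsigma (\<sigma> j) (w j ^ k)
      = ln (cmod q) * signed_class_sum N k (log_coeff (w j)) + K / real p" for j
    using p0 by (simp add: ln_w K_def field_simps power2_eq_square)
  then have "(\<Sum>j<p. real p * Jsigma (\<sigma> j) (w j ^ k))
      = ln (cmod q) * (\<Sum>j<p. signed_class_sum N k (log_coeff (w j))) + K"
    using p0 by (simp add: sum.distrib sum_distrib_left)
  also have "(\<Sum>j<p. signed_class_sum N k (log_coeff (w j)))
      = signed_class_sum N k (\<lambda>m. \<Sum>j<p. log_coeff (w j) m)"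
    using w by (intro signed_class_sum_sum[symmetric] summable_on_log_coeff) auto
  also have "(\<lambda>m. \<Sum>j<p. log_coeff (w j) m)
      = (\<lambda>m. if p dvd m then real p ^ 2 * log_coeff q (m div p) else log_coeff q m)"
    unfolding w_def q_def using sum_log_coeff_pth_roots[OF assms(1,2)] by (rule ext)
  finally show ?thesis
    by (simp add: w_def \<sigma>_def K_def)
qed

theorem mainTheorem15:
  fixes N k p :: nat and \<tau> :: complex
  assumes "N \<ge> 3" and "1 \<le> k" and "k \<le> N - 1" and "coprime N k"
    and "prime p" and "odd p"
    and "p mod N = 1 \<or> p mod N = N - 1 \<or> p mod N = 0"
    and "Im \<tau> > 0"
  shows "let q = exp (2 * pi * \<i> * \<tau>);
             qj = (\<lambda>j::nat. exp (2 * pi * \<i> * (\<tau> + of_nat j) / of_nat p));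
             chi = real_of_int (chiN N p)
         in (1 + chi * real p ^ 2) * Jsigma (of_nat N * \<tau>) (q ^ k)
            = (\<Sum>j<p. real p * Jsigma (of_nat N * (\<tau> + of_nat j) / of_nat p) (qj j ^ k))
              + chi * Jsigma (of_nat N * of_nat p * \<tau>) (q ^ (p * k))"
proof -
  have k: "0 < k" "k < N" and "p > 0"
    using assms(1-3,5) prime_gt_0_nat by auto
  define q where "q = exp (2 * pi * \<i> * \<tau>)"
  define chi where "chi = real_of_int (chiN N p)"
  define K where "K = 1 / 3 * (real N * ln (cmod q)) ^ 2 * B3 (real k / real N)"
  have q: "q \<noteq> 0" "cmod q < 1"
    using assms(8) by (simp_all add: q_def)
  have Q: "exp (2 * pi * \<i> * (of_nat N * \<tau>)) = q ^ N"
    unfolding q_def exp_of_nat_mult[symmetric] by (simp add: mult_ac)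
  have lhs: "Jsigma (of_nat N * \<tau>) (q ^ k) = ln (cmod q) * signed_class_sum N k (log_coeff q) + K"
    unfolding K_def by (rule Jsigma_power[OF Q q k])
  have last: "Jsigma (of_nat N * of_nat p * \<tau>) (q ^ (p * k))
      = ln (cmod q) * signed_class_sum N k (\<lambda>s. log_coeff q (p * s)) + real p ^ 2 * K"
    using Jsigma_pth_power[OF Q q k \<open>p > 0\<close>] unfolding K_def by (simp add: mult_ac)
  have middle: "(\<Sum>j<p. real p * Jsigma (of_nat N * (\<tau> + of_nat j) / of_nat p)
                                   (exp (2 * pi * \<i> * (\<tau> + of_nat j) / of_nat p) ^ k))
      = ln (cmod q) * signed_class_sum N k
          (\<lambda>m. if p dvd m then real p ^ 2 * log_coeff q (m div p) else log_coeff q m) + K"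
    unfolding K_def q_def by (rule sum_Jsigma_pth_roots[OF assms(8,5) k])
  have class_split: "signed_class_sum N k
          (\<lambda>m. if p dvd m then real p ^ 2 * log_coeff q (m div p) else log_coeff q m)
      = (1 + chi * real p ^ 2) * signed_class_sum N k (log_coeff q)
        - chi * signed_class_sum N k (\<lambda>s. log_coeff q (p * s))"
    unfolding chi_def using q(2) k assms(7) by (intro signed_class_sum_dvd_split summable_on_log_coeff)
  have linear: "(1 + c * P) * (t * A + K) = t * ((1 + c * P) * A - c * T) + K + c * (t * T + P * K)"
    for c P t A K T :: real
    by (simp add: algebra_simps)
  show ?thesis
    unfolding Let_def q_def[symmetric] chi_def[symmetric] lhs middle last class_split
    by (rule linear)
qed

end
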